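(* Let $X$ be a Banach lattice, $T\in(0,\infty]$, and assume: $G$ generates a $C_0$-semigroup $(S(t))_{t\ge0}$ on $X$; there is $\eta:(0,\infty)\to(0,\infty)$ with $\eta(\delta)\to0$ as $\delta\to0^+$ and $\|\int_{s_0}^{s_1}S(s_1-s)\varphi(s)\,ds\|_X\le\eta(s_1-s_0)\|\varphi\|_{C([s_0,s_1],X)}$ for all $0\le s_0<s_1$, $\varphi\in C([s_0,s_1],X)$; $F:[0,T)\times X\to X$ is continuous and satisfies a Lipschitz condition in the second argument on bounded sets, uniformly in the first argument on compact intervals; for every $\gamma\ge0$, $G-\gamma I$ generates a positive semigroup on $X$; and for every $\tau\in[0,T)$ and $r>0$ there is $\gamma\ge0$ with $F(t,v)+\gamma v\ge0$ for all $v\in X_+$ with $\|v\|\le r$ and all $t\in[0,\tau]$. Let $\phi$ be a positive bounded linear functional on $X$ with $\phi(S(t)f)\le\phi(f)$ for all $f\in X_+$, $t\ge0$. Let $\mathring u\in X_+$ and let $u$ be the unique maximal mild solution on $[0,t_{\max})$ of $u'=Gu+F(t,u)$, $u(0)=\mathring u$. Let $\tau\in(0,t_{\max})$ and $\nu(\tau)\in\mathbb R$ be such that $\phi(F(t,u(t)))\le\nu(\tau)\phi(u(t))$ for all $t\in[0,\tau]$. Then $\phi(u(t))\le\phi(\mathring u)e^{\nu(\tau)t}$ for all $t\in[0,\tau]$.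
   Context: $F$ satisfies a Lipschitz condition in the second argument on bounded sets, uniformly in the first argument on compact intervals, if for every $t'\in[0,T)$ and $r>0$ there is $L$ with $\|F(t,f)-F(t,g)\|\le L\|f-g\|$ for all $\|f\|,\|g\|\le r$ and $t\in[0,t']$. A mild solution on $[0,t_1)$ is $u\in C([0,t_1),X)$ with $u(t)=S(t)\mathring u+\int_0^tS(t-s)F(s,u(s))\,ds$; maximal means it admits no extension to a mild solution on a larger interval $[0,\tilde t_1)$, $\tilde t_1\le T$. A positive semigroup maps $X_+$ into $X_+$; a functional is positive if it is non-negative on $X_+$. *)

theory Defs
  imports "HOL-Analysis.Analysis"
begin

text \<open>Banach lattice: a complete normed vector lattice whose norm is a lattice norm,
  i.e. the modulus |x| = sup x (-x) satisfies |x| \<le> |y| implies norm x \<le> norm y.\<close>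
class banach_lattice = banach + ordered_real_vector + lattice +
  assumes lattice_norm: "sup x (- x) \<le> sup y (- y) \<Longrightarrow> norm x \<le> norm y"

text \<open>[0,T) for T in (0,\<infinity>] encoded as an extended real.\<close>
definition Ico0 :: "ereal \<Rightarrow> real set" where
  "Ico0 T = {t. 0 \<le> t \<and> ereal t < T}"

definition c0_semigroup :: "(real \<Rightarrow> 'a::real_normed_vector \<Rightarrow> 'a) \<Rightarrow> bool" where
  "c0_semigroup S \<longleftrightarrow>
     (\<forall>t\<ge>0. bounded_linear (S t)) \<and> S 0 = id \<and>
     (\<forall>t\<ge>0. \<forall>s\<ge>0. S (t + s) = S t \<circ> S s) \<and>
     (\<forall>x. continuous_on {0..} (\<lambda>t. S t x))"

definition is_generator :: "(real \<Rightarrow> 'a::real_normed_vector \<Rightarrow> 'a) \<Rightarrow> 'a set \<Rightarrow> ('a \<Rightarrow> 'a) \<Rightarrow> bool" where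
  "is_generator S D G \<longleftrightarrow>
     D = {x. \<exists>y. ((\<lambda>h. (1 / h) *\<^sub>R (S h x - x)) \<longlongrightarrow> y) (at_right 0)} \<and>
     (\<forall>x\<in>D. ((\<lambda>h. (1 / h) *\<^sub>R (S h x - x)) \<longlongrightarrow> G x) (at_right 0))"

definition generates_c0 :: "'a set \<Rightarrow> ('a \<Rightarrow> 'a) \<Rightarrow> (real \<Rightarrow> 'a::real_normed_vector \<Rightarrow> 'a) \<Rightarrow> bool" where
  "generates_c0 D G S \<longleftrightarrow> c0_semigroup S \<and> is_generator S D G"

definition positive_semigroup :: "(real \<Rightarrow> 'a::{real_normed_vector,order} \<Rightarrow> 'a) \<Rightarrow> bool" where
  "positive_semigroup S \<longleftrightarrow> (\<forall>t\<ge>0. \<forall>x. 0 \<le> x \<longrightarrow> 0 \<le> S t x)"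

definition lipschitz_bounded_uniform ::
  "ereal \<Rightarrow> (real \<Rightarrow> 'a::real_normed_vector \<Rightarrow> 'a) \<Rightarrow> bool" where
  "lipschitz_bounded_uniform T F \<longleftrightarrow>
     (\<forall>t'\<in>Ico0 T. \<forall>r>0. \<exists>L. \<forall>t\<in>{0..t'}. \<forall>f g. norm f \<le> r \<longrightarrow> norm g \<le> r \<longrightarrow>
        norm (F t f - F t g) \<le> L * norm (f - g))"

text \<open>Mild solution on [0,t1) (with t1 \<le> T so that F is defined there).\<close>
definition mild_solution ::
  "ereal \<Rightarrow> (real \<Rightarrow> 'a::banach \<Rightarrow> 'a) \<Rightarrow> (real \<Rightarrow> 'a \<Rightarrow> 'a) \<Rightarrow> 'a \<Rightarrow> ereal \<Rightarrow> (real \<Rightarrow> 'a) \<Rightarrow> bool" where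
  "mild_solution T S F u0 t1 u \<longleftrightarrow>
     t1 \<le> T \<and> continuous_on (Ico0 t1) u \<and>
     (\<forall>t\<in>Ico0 t1. u t = S t u0 + integral {0..t} (\<lambda>s. S (t - s) (F s (u s))))"

definition maximal_mild_solution ::
  "ereal \<Rightarrow> (real \<Rightarrow> 'a::banach \<Rightarrow> 'a) \<Rightarrow> (real \<Rightarrow> 'a \<Rightarrow> 'a) \<Rightarrow> 'a \<Rightarrow> ereal \<Rightarrow> (real \<Rightarrow> 'a) \<Rightarrow> bool" where
  "maximal_mild_solution T S F u0 t1 u \<longleftrightarrow>
     mild_solution T S F u0 t1 u \<and>
     \<not> (\<exists>t1' v. t1 < t1' \<and> t1' \<le> T \<and> mild_solution T S F u0 t1' v \<and>
                (\<forall>t\<in>Ico0 t1. v t = u t))"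

end

theory Submission
  imports Defs
begin

text \<open>
  Positivity of u comes first. Let p be the positive part sup u 0 of u. For \<gamma> large, the mild
  formula for u can be rewritten with the rescaled semigroup e^(-\<gamma> t) S(t) and the shifted
  nonlinearity F + \<gamma>; evaluating the same right-hand side along p instead of u gives a positive
  vector, so the distance a(t) of u(t) to the positive cone is at most the difference of two
  Duhamel integrals, hence at most C \<integral>_0^t a. Gronwall's inequality forces a = 0.
  Once u \<ge> 0, the shifted integrand F(s, u(s)) + \<gamma> u(s) is positive, so applying \<phi> to the
  rescaled formula and using \<phi> \<circ> S \<le> \<phi> on the positive cone gives
  e^(\<gamma> t) \<phi>(u(t)) \<le> \<phi>(u0) + (\<nu> + \<gamma>) \<integral>_0^t e^(\<gamma> s) \<phi>(u(s)) ds, and Gronwall again yields the bound.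
  That S itself is positive is the hypothesis for \<gamma> = 0: a C0-semigroup is determined by its
  generator, which follows from the uniform boundedness principle and the density of the orbit
  means (1/h) \<integral>_0^h S(r) x dr in the domain.
\<close>

lemma has_vector_derivative_iff_tendsto_quotient:
  fixes f :: "real \<Rightarrow> 'a::real_normed_vector"
  shows "(f has_vector_derivative D) (at x within S) \<longleftrightarrow>
    ((\<lambda>y. (1 / (y - x)) *\<^sub>R (f y - f x)) \<longlongrightarrow> D) (at x within S)"
proof -
  have "norm ((1 / norm (y - x)) *\<^sub>R (f y - (f x + (y - x) *\<^sub>R D))) =
      norm ((1 / (y - x)) *\<^sub>R (f y - f x) - D)" if "y \<noteq> x" for y
  proof -
    have "(1 / (y - x)) *\<^sub>R (f y - f x) - D = (1 / (y - x)) *\<^sub>R (f y - (f x + (y - x) *\<^sub>R D))"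
      using that by (simp add: scaleR_diff_right scaleR_add_right)
    then show ?thesis by simp
  qed
  then have "((\<lambda>y. (1 / norm (y - x)) *\<^sub>R (f y - (f x + (y - x) *\<^sub>R D))) \<longlongrightarrow> 0) (at x within S)
      \<longleftrightarrow> ((\<lambda>y. (1 / (y - x)) *\<^sub>R (f y - f x) - D) \<longlongrightarrow> 0) (at x within S)"
    by (subst (1 2) tendsto_norm_zero_iff[symmetric]) (rule Lim_cong_within; auto)
  then show ?thesis
    unfolding has_vector_derivative_def has_derivative_within
    by (simp add: bounded_linear_scaleR_left Lim_null[symmetric])
qed

lemma has_vector_derivative_tendsto_at_right:
  fixes f :: "real \<Rightarrow> 'a::real_normed_vector"
  assumes "(f has_vector_derivative f') (at a within {a..b})" and "a < b"
  shows "((\<lambda>h. (1 / h) *\<^sub>R (f (a + h) - f a)) \<longlongrightarrow> f') (at_right 0)"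
proof -
  have "filterlim (\<lambda>h. a + h) (at a within {a..b}) (at_right 0)"
    unfolding filterlim_at
  proof
    have "\<forall>\<^sub>F h in at_right 0. h < b - a"
      using \<open>a < b\<close> by (intro order_tendstoD(2)[OF tendsto_ident_at]) auto
    then show "\<forall>\<^sub>F h in at_right 0. a + h \<in> {a..b} \<and> a + h \<noteq> a"
      using eventually_at_right_less by eventually_elim auto
    show "((\<lambda>h. a + h) \<longlongrightarrow> a) (at_right 0)"
      using tendsto_add[OF tendsto_const tendsto_ident_at, of a 0 "{0<..}"] by simp
  qed
  from filterlim_compose[OF assms(1)[unfolded has_vector_derivative_iff_tendsto_quotient] this]
  show ?thesis by simp
qed

lemma filterlim_abs_diff_at_right: "filterlim (\<lambda>y. \<bar>y - s\<bar>) (at_right 0) (at (s::real) within A)"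
  unfolding filterlim_at
proof
  show "\<forall>\<^sub>F y in at s within A. \<bar>y - s\<bar> \<in> {0<..} \<and> \<bar>y - s\<bar> \<noteq> 0"
    by (auto simp: eventually_at_filter)
  have "((\<lambda>y. \<bar>y - s\<bar>) \<longlongrightarrow> \<bar>s - s\<bar>) (at s within A)"
    by (intro tendsto_intros)
  then show "((\<lambda>y. \<bar>y - s\<bar>) \<longlongrightarrow> 0) (at s within A)"
    by simp
qed

lemma has_vector_derivative_exp_scaleR_integral:
  fixes g :: "real \<Rightarrow> 'a::banach"
  assumes g: "continuous_on {0..t} g" and s: "s \<in> {0..t}"
  shows "((\<lambda>s. exp (- \<gamma> * (t - s)) *\<^sub>R (x + integral {0..s} g)) has_vector_derivative
      exp (- \<gamma> * (t - s)) *\<^sub>R (g s + \<gamma> *\<^sub>R (x + integral {0..s} g))) (at s within {0..t})"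
proof -
  have "((\<lambda>s. x + integral {0..s} g) has_vector_derivative 0 + g s) (at s within {0..t})"
    by (rule has_vector_derivative_add[OF has_vector_derivative_const integral_has_vector_derivative[OF g s]])
  moreover have "((\<lambda>s. exp (- \<gamma> * (t - s))) has_real_derivative exp (- \<gamma> * (t - s)) * \<gamma>)
      (at s within {0..t})"
    by (auto intro!: derivative_eq_intros)
  ultimately have "((\<lambda>s. exp (- \<gamma> * (t - s)) *\<^sub>R (x + integral {0..s} g)) has_vector_derivative
      exp (- \<gamma> * (t - s)) *\<^sub>R (0 + g s) + (exp (- \<gamma> * (t - s)) * \<gamma>) *\<^sub>R (x + integral {0..s} g))
      (at s within {0..t})"
    by (intro has_vector_derivative_scaleR)
  then show ?thesis
    by (simp add: scaleR_add_right)
qed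

lemma continuous_on_uncurry_compose:
  assumes F: "continuous_on (A \<times> UNIV) (\<lambda>(t, x). F t x)" and w: "continuous_on A w"
  shows "continuous_on A (\<lambda>t. F t (w t))"
proof -
  have "continuous_on A (\<lambda>t. (\<lambda>(t, x). F t x) (t, w t))"
    by (rule continuous_on_compose2[OF F]) (auto intro!: continuous_intros w)
  then show ?thesis
    by simp
qed

lemma gronwall_integral:
  fixes b :: "real \<Rightarrow> real"
  assumes "0 \<le> K" and b: "continuous_on {0..\<tau>} b"
    and le: "\<And>t. t \<in> {0..\<tau>} \<Longrightarrow> b t \<le> c + K * integral {0..t} b"
    and t: "t \<in> {0..\<tau>}"
  shows "b t \<le> c * exp (K * t)"
proof -
  define B where "B s = integral {0..s} b" for s
  define W where "W s = exp (- K * s) * (c + K * B s)" for s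
  have W': "(W has_real_derivative K * exp (- K * s) * (b s - (c + K * B s))) (at s within {0..\<tau>})"
    if s: "s \<in> {0..\<tau>}" for s
  proof -
    have "(B has_real_derivative b s) (at s within {0..\<tau>})"
      unfolding B_def by (rule integral_has_real_derivative[OF b s])
    then show ?thesis
      unfolding W_def by (auto intro!: derivative_eq_intros simp: algebra_simps)
  qed
  have "W t \<le> W 0"
  proof (rule DERIV_nonpos_imp_decreasing_open[where f = W])
    show "0 \<le> t"
      using t by simp
    have "continuous_on {0..\<tau>} W"
      using W' by (meson DERIV_continuous continuous_at_imp_continuous_on continuous_on_eq_continuous_within)
    then show "continuous_on {0..t} W"
      by (rule continuous_on_subset) (use t in auto)
    fix s
    assume s: "0 < s" "s < t"
    then have "s \<in> {0..\<tau>}" "at s within {0..\<tau>} = at s"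
      using t by (auto intro: at_within_Icc_at)
    moreover have "K * exp (- K * s) * (b s - (c + K * B s)) \<le> 0"
      using le[of s] \<open>s \<in> {0..\<tau>}\<close> \<open>0 \<le> K\<close> by (intro mult_nonneg_nonpos) (auto simp: B_def)
    ultimately show "\<exists>y. (W has_real_derivative y) (at s) \<and> y \<le> 0"
      using W' by metis
  qed
  moreover have "B 0 = 0"
    by (simp add: B_def)
  ultimately have "c + K * B t \<le> c * exp (K * t)"
    by (simp add: W_def exp_minus field_simps)
  then show ?thesis
    using le[OF t] by (simp add: B_def)
qed

lemma gronwall_integral_exp_weighted:
  fixes b :: "real \<Rightarrow> real"
  assumes "0 \<le> K" and b: "continuous_on {0..\<tau>} b"
    and le: "\<And>t. t \<in> {0..\<tau>} \<Longrightarrow>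
      b t \<le> exp (- \<gamma> * t) * c + integral {0..t} (\<lambda>s. exp (- \<gamma> * (t - s)) * (K * b s))"
    and t: "t \<in> {0..\<tau>}"
  shows "b t \<le> c * exp ((K - \<gamma>) * t)"
proof -
  define e where "e s = exp (\<gamma> * s) * b s" for s
  have e: "continuous_on {0..\<tau>} e"
    unfolding e_def by (intro continuous_intros b)
  have "e t \<le> c + K * integral {0..t} e" if t: "t \<in> {0..\<tau>}" for t
  proof -
    have sub: "{0..t} \<subseteq> {0..\<tau>}"
      using t by auto
    have "e t \<le> exp (\<gamma> * t) * (exp (- \<gamma> * t) * c + integral {0..t} (\<lambda>s. exp (- \<gamma> * (t - s)) * (K * b s)))"
      unfolding e_def using le[OF t] by (rule mult_left_mono) simp
    also have "\<dots> = c + exp (\<gamma> * t) * integral {0..t} (\<lambda>s. exp (- \<gamma> * (t - s)) * (K * b s))"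
      by (simp add: distrib_left mult.assoc[symmetric] mult_exp_exp)
    also have "exp (\<gamma> * t) * integral {0..t} (\<lambda>s. exp (- \<gamma> * (t - s)) * (K * b s))
        = integral {0..t} (\<lambda>s. exp (\<gamma> * t) * (exp (- \<gamma> * (t - s)) * (K * b s)))"
      by (intro integral_mult integrable_continuous_interval continuous_intros continuous_on_subset[OF b sub])
    also have "\<dots> = integral {0..t} (\<lambda>s. K * e s)"
      by (intro integral_cong) (simp add: e_def mult_exp_exp algebra_simps)
    also have "\<dots> = K * integral {0..t} e"
      by simp
    finally show ?thesis .
  qed
  then have "e t \<le> c * exp (K * t)"
    by (rule gronwall_integral[OF \<open>0 \<le> K\<close> e _ t])
  have "b t = exp (- \<gamma> * t) * e t"
    by (simp add: e_def mult.assoc[symmetric] mult_exp_exp)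
  also have "\<dots> \<le> exp (- \<gamma> * t) * (c * exp (K * t))"
    using \<open>e t \<le> c * exp (K * t)\<close> by (rule mult_left_mono) simp
  also have "\<dots> = c * exp ((K - \<gamma>) * t)"
    by (simp add: mult_exp_exp algebra_simps)
  finally show ?thesis .
qed

lemma norm_shifted_diff_le:
  fixes f g x y :: "'a::real_normed_vector"
  assumes "norm (f - g) \<le> L * norm (x - y)" and "0 \<le> \<gamma>"
  shows "norm ((f + \<gamma> *\<^sub>R x) - (g + \<gamma> *\<^sub>R y)) \<le> (\<bar>L\<bar> + \<gamma>) * norm (x - y)"
proof -
  have "norm ((f + \<gamma> *\<^sub>R x) - (g + \<gamma> *\<^sub>R y)) \<le> norm (f - g) + norm (\<gamma> *\<^sub>R (x - y))"
    by (metis (no_types) add_diff_add norm_triangle_ineq scaleR_diff_right)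
  also have "\<dots> \<le> \<bar>L\<bar> * norm (x - y) + \<gamma> * norm (x - y)"
    using assms mult_right_mono[OF abs_ge_self[of L], of "norm (x - y)"] by simp
  finally show ?thesis
    by (simp add: distrib_right)
qed

lemma norm_linear_le_of_bounded_on_ball:
  fixes T :: "'a::real_normed_vector \<Rightarrow> 'b::real_normed_vector"
  assumes "linear T" and "0 < e" and bound: "\<And>y. y \<in> ball x0 e \<Longrightarrow> norm (T y) \<le> B"
  shows "norm (T x) \<le> 4 * B / e * norm x"
proof (cases "x = 0")
  case True
  then show ?thesis
    using linear_0[OF \<open>linear T\<close>] by simp
next
  case False
  define c where "c = e / 2 / norm x"
  have "0 < c"
    using \<open>0 < e\<close> False by (simp add: c_def)
  have "x0 + c *\<^sub>R x \<in> ball x0 e" "x0 \<in> ball x0 e"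
    using \<open>0 < e\<close> False by (simp_all add: c_def dist_norm)
  then have "norm (T (x0 + c *\<^sub>R x)) \<le> B" "norm (T x0) \<le> B"
    by (simp_all add: bound)
  moreover have "c * norm (T x) = norm (T (x0 + c *\<^sub>R x) - T x0)"
    using \<open>linear T\<close> \<open>0 < c\<close> by (simp add: linear_add linear_scale)
  then have "c * norm (T x) \<le> norm (T (x0 + c *\<^sub>R x)) + norm (T x0)"
    using norm_triangle_ineq4 by metis
  ultimately have "norm (T x) \<le> 2 * B / c"
    using \<open>0 < c\<close> by (simp add: field_simps)
  also have "\<dots> = 4 * B / e * norm x"
    using \<open>0 < e\<close> False by (simp add: c_def field_simps)
  finally show ?thesis .
qed

theorem uniform_boundedness:
  fixes T :: "'i \<Rightarrow> 'a::banach \<Rightarrow> 'b::real_normed_vector"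
  assumes lin: "\<And>i. i \<in> I \<Longrightarrow> bounded_linear (T i)"
    and pointwise: "\<And>x. \<exists>B. \<forall>i\<in>I. norm (T i x) \<le> B"
  shows "\<exists>M\<ge>0. \<forall>i\<in>I. \<forall>x. norm (T i x) \<le> M * norm x"
proof -
  define E where "E n = (\<Inter>i\<in>I. {x. norm (T i x) \<le> real n})" for n :: nat
  have "closed (E n)" for n
    unfolding E_def
    by (intro closed_INT ballI closed_Collect_le continuous_on_norm linear_continuous_on lin
        continuous_on_const)
  moreover have "(\<Union>n. E n) = UNIV"
  proof -
    have "x \<in> (\<Union>n. E n)" for x
    proof -
      obtain B where "\<forall>i\<in>I. norm (T i x) \<le> B"
        using pointwise by blast
      moreover obtain n :: nat where "B \<le> real n"
        using real_arch_simple by blast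
      ultimately have "x \<in> E n"
        unfolding E_def by force
      then show ?thesis by blast
    qed
    then show ?thesis by blast
  qed
  ultimately obtain n where "interior (E n) \<noteq> {}"
    using Baire_category_alt[of euclidean "range E"]
    by (force simp: completely_metrizable_space_euclidean closed_closedin[symmetric])
  then obtain x0 e where "0 < e" "ball x0 e \<subseteq> E n"
    by (meson equals0I interior_subset open_contains_ball_eq open_interior order.trans)
  have "norm (T i x) \<le> 4 * real n / e * norm x" if "i \<in> I" for i x
  proof (rule norm_linear_le_of_bounded_on_ball)
    show "linear (T i)"
      using lin[OF that] by (rule bounded_linear.linear)
    show "norm (T i y) \<le> real n" if "y \<in> ball x0 e" for y
      using \<open>ball x0 e \<subseteq> E n\<close> \<open>i \<in> I\<close> \<open>y \<in> ball x0 e\<close> unfolding E_def by blast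
  qed (fact \<open>0 < e\<close>)
  moreover have "0 \<le> 4 * real n / e"
    using \<open>0 < e\<close> by simp
  ultimately show ?thesis by blast
qed

section \<open>Banach lattices\<close>

lemma sup_neg_nonneg: "0 \<le> sup x (- x)" for x :: "'a::{ordered_real_vector, lattice}"
proof -
  have "x + - x \<le> sup x (- x) + sup x (- x)"
    by (intro add_mono) auto
  then have "0 \<le> sup x (- x) + sup x (- x)"
    by simp
  then have "0 \<le> (1 / 2 :: real) *\<^sub>R (sup x (- x) + sup x (- x))"
    by (intro scaleR_nonneg_nonneg) auto
  then show ?thesis
    by (simp add: scaleR_add_right[symmetric] scaleR_add_left[symmetric])
qed

lemma norm_sup_zero_le: "norm (sup x 0) \<le> norm x" for x :: "'a::banach_lattice"
proof (rule lattice_norm)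
  have "- sup x 0 \<le> sup x 0"
    by (meson neg_le_0_iff_le order.trans sup_ge2)
  then show "sup (sup x 0) (- sup x 0) \<le> sup x (- x)"
    using sup_neg_nonneg[of x] by (simp add: sup_absorb1 le_supI1)
qed

lemma norm_sup_zero_diff_le: "norm (sup x 0 - sup y 0) \<le> norm (x - y)" for x y :: "'a::banach_lattice"
proof (rule lattice_norm)
  define c where "c = sup (x - y) (- (x - y))"
  have "0 \<le> c" unfolding c_def by (rule sup_neg_nonneg)
  have "x \<le> sup y 0 + c" "y \<le> sup x 0 + c"
    using add_mono[OF sup_ge1[of y 0] sup_ge1[of "x - y" "- (x - y)"]]
      add_mono[OF sup_ge1[of x 0] sup_ge2[of "- (x - y)" "x - y"]]
    by (simp_all add: c_def sup_commute)
  with \<open>0 \<le> c\<close> have "sup x 0 \<le> sup y 0 + c" "sup y 0 \<le> sup x 0 + c"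
    by (simp_all add: add_nonneg_nonneg)
  then have "sup x 0 - sup y 0 \<le> c" "- (sup x 0 - sup y 0) \<le> c"
    by (simp_all add: diff_le_eq add.commute)
  then show "sup (sup x 0 - sup y 0) (- (sup x 0 - sup y 0)) \<le> sup (x - y) (- (x - y))"
    unfolding c_def by simp
qed

lemma norm_diff_sup_zero_le:
  fixes x p :: "'a::banach_lattice"
  assumes "0 \<le> p"
  shows "norm (x - sup x 0) \<le> norm (x - p)"
proof (rule lattice_norm)
  define c where "c = sup (x - p) (- (x - p))"
  have "0 \<le> c" unfolding c_def by (rule sup_neg_nonneg)
  then have "x - sup x 0 \<le> c"
    by (metis diff_le_0_iff_le order.trans sup_ge1)
  have "- x \<le> - (x - p)"
    using \<open>0 \<le> p\<close> by simp
  also have "\<dots> \<le> c"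
    unfolding c_def by simp
  finally have "0 \<le> x + c"
    using add_left_mono[of "- x" c x] by simp
  then have "sup x 0 \<le> x + c"
    using \<open>0 \<le> c\<close> by simp
  then have "- (x - sup x 0) \<le> c" by (simp add: diff_le_eq add.commute)
  with \<open>x - sup x 0 \<le> c\<close> show "sup (x - sup x 0) (- (x - sup x 0)) \<le> sup (x - p) (- (x - p))"
    unfolding c_def by simp
qed

lemma continuous_on_sup_zero: "continuous_on A (\<lambda>x::'a::banach_lattice. sup x 0)"
  unfolding continuous_on_iff dist_norm
  by (metis norm_sup_zero_diff_le order_le_less_trans)

lemma closed_nonneg: "closed {x::'a::banach_lattice. 0 \<le> x}"
proof -
  have "{x::'a. 0 \<le> x} = (\<lambda>x. x - sup x 0) -` {0}"
    by (auto simp: sup_absorb1) (metis eq_iff_diff_eq_0 sup_ge2)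
  moreover have "continuous_on UNIV (\<lambda>x::'a. x - sup x 0)"
    by (intro continuous_intros continuous_on_sup_zero)
  ultimately show ?thesis
    by (metis closed_singleton closed_vimage continuous_on_eq_continuous_within UNIV_I)
qed

lemma integral_nonneg_banach_lattice:
  fixes f :: "real \<Rightarrow> 'a::banach_lattice"
  assumes "\<And>x. x \<in> {a..b} \<Longrightarrow> 0 \<le> f x"
  shows "0 \<le> integral {a..b} f"
proof (cases "f integrable_on {a..b}")
  case False
  then show ?thesis by (simp add: not_integrable_integral)
next
  case True
  then have int: "(f has_integral integral {a..b} f) (cbox a b)"
    by (simp add: has_integral_integral)
  have "integral {a..b} f \<in> closure {x. 0 \<le> x}"
    unfolding closure_approachable
  proof (intro allI impI)
    fix e :: real
    assume "e > 0"
    then obtain \<gamma> where "gauge \<gamma>" and fine: "\<And>\<D>. \<D> tagged_division_of cbox a b \<Longrightarrow> \<gamma> fine \<D> \<Longrightarrow>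
        norm ((\<Sum>(x, k)\<in>\<D>. Henstock_Kurzweil_Integration.content k *\<^sub>R f x) - integral {a..b} f) < e"
      using int[unfolded has_integral] by meson
    obtain \<D> where \<D>: "\<D> tagged_division_of cbox a b" "\<gamma> fine \<D>"
      using fine_division_exists[OF \<open>gauge \<gamma>\<close>] by blast
    have "0 \<le> (\<Sum>(x, k)\<in>\<D>. Henstock_Kurzweil_Integration.content k *\<^sub>R f x)"
    proof (intro sum_nonneg, clarify)
      fix x k
      assume "(x, k) \<in> \<D>"
      then have "x \<in> {a..b}"
        using tagged_division_ofD(2,3)[OF \<D>(1)] by fastforce
      then show "0 \<le> Henstock_Kurzweil_Integration.content k *\<^sub>R f x"
        by (intro scaleR_nonneg_nonneg assms) auto
    qed
    then show "\<exists>y\<in>{x. 0 \<le> x}. dist y (integral {a..b} f) < e"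
      using fine[OF \<D>] by (auto simp: dist_norm)
  qed
  then show ?thesis
    using closed_nonneg closure_closed by blast
qed

section \<open>Strongly continuous semigroups\<close>

lemma c0_semigroup_bounded_linear: "c0_semigroup S \<Longrightarrow> 0 \<le> t \<Longrightarrow> bounded_linear (S t)"
  unfolding c0_semigroup_def by auto

lemma c0_semigroup_add_time: "c0_semigroup S \<Longrightarrow> 0 \<le> t \<Longrightarrow> 0 \<le> s \<Longrightarrow> S (t + s) x = S t (S s x)"
  unfolding c0_semigroup_def by auto

lemma c0_semigroup_zero_time: "c0_semigroup S \<Longrightarrow> S 0 x = x"
  unfolding c0_semigroup_def by auto

lemma c0_semigroup_continuous_on_orbit: "c0_semigroup S \<Longrightarrow> continuous_on {0..} (\<lambda>t. S t x)"
  unfolding c0_semigroup_def by auto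

lemma c0_semigroup_add: "c0_semigroup S \<Longrightarrow> 0 \<le> t \<Longrightarrow> S t (x + y) = S t x + S t y"
  by (metis c0_semigroup_bounded_linear bounded_linear.linear linear_add)

lemma c0_semigroup_diff: "c0_semigroup S \<Longrightarrow> 0 \<le> t \<Longrightarrow> S t (x - y) = S t x - S t y"
  by (metis c0_semigroup_bounded_linear bounded_linear.linear linear_diff)

lemma c0_semigroup_scaleR: "c0_semigroup S \<Longrightarrow> 0 \<le> t \<Longrightarrow> S t (c *\<^sub>R x) = c *\<^sub>R S t x"
  by (metis c0_semigroup_bounded_linear bounded_linear.linear linear_scale)

lemma c0_semigroup_bounded_on_interval:
  assumes "c0_semigroup (S :: real \<Rightarrow> 'a::banach \<Rightarrow> 'a)"
  obtains M where "0 \<le> M" "\<And>t x. t \<in> {0..b} \<Longrightarrow> norm (S t x) \<le> M * norm x"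
proof -
  have "\<exists>B. \<forall>t\<in>{0..b}. norm (S t x) \<le> B" for x
  proof -
    have "compact ((\<lambda>t. S t x) ` {0..b})"
      by (intro compact_continuous_image continuous_on_subset[OF c0_semigroup_continuous_on_orbit[OF assms]])
        auto
    then show ?thesis
      by (meson bounded_iff compact_imp_bounded image_eqI)
  qed
  then show ?thesis
    using uniform_boundedness[of "{0..b}" S] c0_semigroup_bounded_linear[OF assms] that
    by auto
qed

lemma c0_semigroup_tendsto:
  fixes S :: "real \<Rightarrow> 'a::banach \<Rightarrow> 'a"
  assumes c0: "c0_semigroup S" and \<sigma>: "(\<sigma> \<longlongrightarrow> \<sigma>0) F" and w: "(w \<longlongrightarrow> w0) F"
    and nonneg: "\<forall>\<^sub>F x in F. 0 \<le> \<sigma> x" and "0 \<le> \<sigma>0"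
  shows "((\<lambda>x. S (\<sigma> x) (w x)) \<longlongrightarrow> S \<sigma>0 w0) F"
proof -
  obtain M where "0 \<le> M" and M: "\<And>t x. t \<in> {0..\<sigma>0 + 1} \<Longrightarrow> norm (S t x) \<le> M * norm x"
    by (rule c0_semigroup_bounded_on_interval[OF c0]) (rule that)
  have "((\<lambda>x. S (\<sigma> x) w0) \<longlongrightarrow> S \<sigma>0 w0) F"
    by (rule continuous_on_tendsto_compose[OF c0_semigroup_continuous_on_orbit[OF c0] \<sigma>])
      (use nonneg \<open>0 \<le> \<sigma>0\<close> in auto)
  then have orbit: "((\<lambda>x. S (\<sigma> x) w0 - S \<sigma>0 w0) \<longlongrightarrow> 0) F"
    by (simp add: Lim_null[symmetric])
  have arg: "((\<lambda>x. w x - w0) \<longlongrightarrow> 0) F"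
    using w by (simp add: Lim_null[symmetric])
  have "((\<lambda>x. M * norm (w x - w0) + norm (S (\<sigma> x) w0 - S \<sigma>0 w0)) \<longlongrightarrow> M * 0 + 0) F"
    by (intro tendsto_add tendsto_mult tendsto_const tendsto_norm_zero orbit arg)
  then have bound: "((\<lambda>x. M * norm (w x - w0) + norm (S (\<sigma> x) w0 - S \<sigma>0 w0)) \<longlongrightarrow> 0) F"
    by simp
  have "\<forall>\<^sub>F x in F. \<sigma> x < \<sigma>0 + 1"
    using \<sigma> by (rule order_tendstoD) simp
  then have "\<forall>\<^sub>F x in F. norm (S (\<sigma> x) (w x) - S \<sigma>0 w0)
      \<le> M * norm (w x - w0) + norm (S (\<sigma> x) w0 - S \<sigma>0 w0)"
    using nonneg
  proof eventually_elim
    case (elim x)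
    have "S (\<sigma> x) (w x) - S \<sigma>0 w0 = S (\<sigma> x) (w x - w0) + (S (\<sigma> x) w0 - S \<sigma>0 w0)"
      using elim by (simp add: c0_semigroup_diff[OF c0])
    then have "norm (S (\<sigma> x) (w x) - S \<sigma>0 w0)
        \<le> norm (S (\<sigma> x) (w x - w0)) + norm (S (\<sigma> x) w0 - S \<sigma>0 w0)"
      by (metis norm_triangle_ineq)
    then show ?case
      using M[of "\<sigma> x" "w x - w0"] elim by simp
  qed
  then have "((\<lambda>x. S (\<sigma> x) (w x) - S \<sigma>0 w0) \<longlongrightarrow> 0) F"
    by (rule Lim_null_comparison[OF _ bound])
  then show ?thesis
    by (simp add: Lim_null[symmetric])
qed

lemma continuous_on_c0_semigroup_compose:
  fixes S :: "real \<Rightarrow> 'a::banach \<Rightarrow> 'a"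
  assumes c0: "c0_semigroup S" and "continuous_on A \<sigma>" "continuous_on A w" "\<And>x. x \<in> A \<Longrightarrow> 0 \<le> \<sigma> x"
  shows "continuous_on A (\<lambda>x. S (\<sigma> x) (w x))"
  unfolding continuous_on_def
proof
  fix x
  assume "x \<in> A"
  show "((\<lambda>x. S (\<sigma> x) (w x)) \<longlongrightarrow> S (\<sigma> x) (w x)) (at x within A)"
    by (rule c0_semigroup_tendsto[OF c0])
      (use assms \<open>x \<in> A\<close> in \<open>auto simp: continuous_on_def eventually_at_filter\<close>)
qed

lemma is_generator_tendsto:
  "is_generator S D G \<Longrightarrow> x \<in> D \<Longrightarrow> ((\<lambda>h. (1 / h) *\<^sub>R (S h x - x)) \<longlongrightarrow> G x) (at_right 0)"
  unfolding is_generator_def by auto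

lemma is_generator_intro:
  assumes "is_generator S D G" and "((\<lambda>h. (1 / h) *\<^sub>R (S h x - x)) \<longlongrightarrow> y) (at_right 0)"
  shows "x \<in> D" and "G x = y"
proof -
  show "x \<in> D"
    using assms unfolding is_generator_def by auto
  then show "G x = y"
    using tendsto_unique[OF trivial_limit_at_right_real is_generator_tendsto[OF assms(1)] assms(2)]
    by simp
qed

lemma c0_semigroup_orbit_has_vector_derivative:
  fixes S :: "real \<Rightarrow> 'a::banach \<Rightarrow> 'a"
  assumes c0: "c0_semigroup S" and gen: "is_generator S D G" and "x \<in> D" and "0 \<le> t"
  shows "((\<lambda>t. S t x) has_vector_derivative S t (G x)) (at t within {0..})"
  unfolding has_vector_derivative_iff_tendsto_quotient
proof (rule Lim_transform_eventually)
  define Q where "Q h = (1 / h) *\<^sub>R (S h x - x)" for h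
  \<comment> \<open>Both one-sided quotients are S (min t y) applied to a forward quotient of length |y - t|.\<close>
  have "(1 / (y - t)) *\<^sub>R (S y x - S t x) = S (min t y) (Q \<bar>y - t\<bar>)" if "0 \<le> y" "y \<noteq> t" for y
  proof (cases "t < y")
    case True
    then have "S y x = S t (S (y - t) x)"
      using c0_semigroup_add_time[OF c0, of t "y - t"] \<open>0 \<le> t\<close> by simp
    then show ?thesis
      using True \<open>0 \<le> t\<close> by (simp add: Q_def min_def c0_semigroup_diff[OF c0] c0_semigroup_scaleR[OF c0])
  next
    case False
    then have "S t x = S y (S (t - y) x)"
      using c0_semigroup_add_time[OF c0, of y "t - y"] \<open>0 \<le> y\<close> by simp
    then have "(1 / (y - t)) *\<^sub>R (S y x - S t x) = S y ((1 / (y - t)) *\<^sub>R (x - S (t - y) x))"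
      using \<open>0 \<le> y\<close> by (simp add: c0_semigroup_diff[OF c0] c0_semigroup_scaleR[OF c0])
    moreover have "1 / (y - t) = - (1 / (t - y))"
      by (simp add: minus_divide_right)
    then have "(1 / (y - t)) *\<^sub>R (x - S (t - y) x) = Q (t - y)"
      unfolding Q_def by (simp add: scaleR_diff_right)
    ultimately show ?thesis
      using False by (simp add: min_def)
  qed
  then show "\<forall>\<^sub>F y in at t within {0..}. S (min t y) (Q \<bar>y - t\<bar>) = (1 / (y - t)) *\<^sub>R (S y x - S t x)"
    by (auto simp: eventually_at_filter)
  have "((\<lambda>y. S (min t y) (Q \<bar>y - t\<bar>)) \<longlongrightarrow> S (min t t) (G x)) (at t within {0..})"
  proof (rule c0_semigroup_tendsto[OF c0])
    show "((\<lambda>y. min t y) \<longlongrightarrow> min t t) (at t within {0..})"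
      by (intro tendsto_intros)
    show "((\<lambda>y. Q \<bar>y - t\<bar>) \<longlongrightarrow> G x) (at t within {0..})"
      using filterlim_compose[OF is_generator_tendsto[OF gen \<open>x \<in> D\<close>] filterlim_abs_diff_at_right]
      unfolding Q_def .
    show "\<forall>\<^sub>F y in at t within {0..}. 0 \<le> min t y"
      using \<open>0 \<le> t\<close> by (auto simp: eventually_at_filter)
  qed (use \<open>0 \<le> t\<close> in simp)
  then show "((\<lambda>y. S (min t y) (Q \<bar>y - t\<bar>)) \<longlongrightarrow> S t (G x)) (at t within {0..})"
    by simp
qed

lemma is_generator_domain_invariant:
  fixes S :: "real \<Rightarrow> 'a::banach \<Rightarrow> 'a"
  assumes c0: "c0_semigroup S" and gen: "is_generator S D G" and "x \<in> D" and "0 \<le> t"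
  shows "S t x \<in> D" and "G (S t x) = S t (G x)"
proof -
  have "((\<lambda>h. S t ((1 / h) *\<^sub>R (S h x - x))) \<longlongrightarrow> S t (G x)) (at_right 0)"
    using bounded_linear.tendsto[OF c0_semigroup_bounded_linear[OF c0 \<open>0 \<le> t\<close>]
        is_generator_tendsto[OF gen \<open>x \<in> D\<close>]] .
  moreover have "\<forall>\<^sub>F h in at_right 0. S t ((1 / h) *\<^sub>R (S h x - x)) = (1 / h) *\<^sub>R (S h (S t x) - S t x)"
    using eventually_at_right_less
  proof eventually_elim
    case (elim h)
    then have "S h (S t x) = S t (S h x)"
      using c0_semigroup_add_time[OF c0, of h t x] c0_semigroup_add_time[OF c0, of t h x] \<open>0 \<le> t\<close>
      by (simp add: add.commute)
    then show ?case
      using \<open>0 \<le> t\<close> by (simp add: c0_semigroup_diff[OF c0] c0_semigroup_scaleR[OF c0])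
  qed
  ultimately have "((\<lambda>h. (1 / h) *\<^sub>R (S h (S t x) - S t x)) \<longlongrightarrow> S t (G x)) (at_right 0)"
    by (rule Lim_transform_eventually)
  then show "S t x \<in> D" and "G (S t x) = S t (G x)"
    using is_generator_intro[OF gen] by auto
qed

lemma c0_semigroup_backward_has_vector_derivative:
  fixes S :: "real \<Rightarrow> 'a::banach \<Rightarrow> 'a"
  assumes c0: "c0_semigroup S" and gen: "is_generator S D G"
    and v: "(v has_vector_derivative v') (at s within {0..t})" and "v s \<in> D" and s: "s \<in> {0..t}"
  shows "((\<lambda>r. S (t - r) (v r)) has_vector_derivative S (t - s) v' - S (t - s) (G (v s)))
    (at s within {0..t})"
  unfolding has_vector_derivative_iff_tendsto_quotient
proof (rule Lim_transform_eventually)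
  have "((\<lambda>\<sigma>. S \<sigma> (v s)) has_vector_derivative S (t - s) (G (v s)))
      (at (t - s) within (\<lambda>r. t - r) ` {0..t})"
    using s by (intro has_vector_derivative_within_subset[OF
        c0_semigroup_orbit_has_vector_derivative[OF c0 gen \<open>v s \<in> D\<close>]]) auto
  moreover have "((\<lambda>r. t - r) has_vector_derivative 0 - 1) (at s within {0..t})"
    by (intro has_vector_derivative_diff has_vector_derivative_const has_vector_derivative_id)
  ultimately have "((\<lambda>r. S (t - r) (v s)) has_vector_derivative - S (t - s) (G (v s))) (at s within {0..t})"
    using vector_diff_chain_within by (fastforce simp: o_def)
  then have semigroup: "((\<lambda>r. (1 / (r - s)) *\<^sub>R (S (t - r) (v s) - S (t - s) (v s)))
      \<longlongrightarrow> - S (t - s) (G (v s))) (at s within {0..t})"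
    unfolding has_vector_derivative_iff_tendsto_quotient .
  have argument: "((\<lambda>r. S (t - r) ((1 / (r - s)) *\<^sub>R (v r - v s))) \<longlongrightarrow> S (t - s) v')
      (at s within {0..t})"
  proof (rule c0_semigroup_tendsto[OF c0])
    show "((\<lambda>r. t - r) \<longlongrightarrow> t - s) (at s within {0..t})"
      by (intro tendsto_diff tendsto_const tendsto_ident_at)
    show "((\<lambda>r. (1 / (r - s)) *\<^sub>R (v r - v s)) \<longlongrightarrow> v') (at s within {0..t})"
      using v unfolding has_vector_derivative_iff_tendsto_quotient .
    show "\<forall>\<^sub>F r in at s within {0..t}. 0 \<le> t - r"
      by (simp add: eventually_at_filter)
  qed (use s in simp)
  show "((\<lambda>r. S (t - r) ((1 / (r - s)) *\<^sub>R (v r - v s))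
      + (1 / (r - s)) *\<^sub>R (S (t - r) (v s) - S (t - s) (v s)))
      \<longlongrightarrow> S (t - s) v' - S (t - s) (G (v s))) (at s within {0..t})"
    using tendsto_add[OF argument semigroup] by simp
  have "S (t - r) ((1 / (r - s)) *\<^sub>R (v r - v s))
      + (1 / (r - s)) *\<^sub>R (S (t - r) (v s) - S (t - s) (v s))
      = (1 / (r - s)) *\<^sub>R (S (t - r) (v r) - S (t - s) (v s))" if "r \<in> {0..t}" for r
    using that by (simp add: c0_semigroup_scaleR[OF c0] c0_semigroup_diff[OF c0] scaleR_diff_right)
  then show "\<forall>\<^sub>F r in at s within {0..t}. S (t - r) ((1 / (r - s)) *\<^sub>R (v r - v s))
      + (1 / (r - s)) *\<^sub>R (S (t - r) (v s) - S (t - s) (v s))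
      = (1 / (r - s)) *\<^sub>R (S (t - r) (v r) - S (t - s) (v s))"
    by (simp add: eventually_at_filter)
qed

lemma c0_semigroup_eq_on_domain:
  fixes S P :: "real \<Rightarrow> 'a::banach \<Rightarrow> 'a"
  assumes cS: "c0_semigroup S" and cP: "c0_semigroup P"
    and gS: "is_generator S D G" and gP: "is_generator P D G" and "x \<in> D" and "0 \<le> t"
  shows "S t x = P t x"
proof -
  \<comment> \<open>r \<mapsto> S (t - r) (P r x) has derivative S (t - r) (P r (G x)) - S (t - r) (G (P r x)) = 0.\<close>
  have der: "((\<lambda>r. S (t - r) (P r x)) has_derivative (\<lambda>_. 0)) (at r within {0..t})"
    if r: "r \<in> {0..t}" for r
  proof -
    have orbit: "((\<lambda>r. P r x) has_vector_derivative P r (G x)) (at r within {0..t})"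
      using r by (intro has_vector_derivative_within_subset[OF
          c0_semigroup_orbit_has_vector_derivative[OF cP gP \<open>x \<in> D\<close>]]) auto
    have "P r x \<in> D" "G (P r x) = P r (G x)"
      using is_generator_domain_invariant[OF cP gP \<open>x \<in> D\<close>] r by auto
    then have "((\<lambda>r. S (t - r) (P r x)) has_vector_derivative 0) (at r within {0..t})"
      using c0_semigroup_backward_has_vector_derivative[OF cS gS orbit _ r] by simp
    then show ?thesis
      by (simp add: has_vector_derivative_def)
  qed
  then obtain c where const: "\<forall>r\<in>{0..t}. S (t - r) (P r x) = c"
    using has_derivative_zero_constant[OF convex_real_interval(5) der] by blast
  show ?thesis
    using const[rule_format, of 0] const[rule_format, of t] \<open>0 \<le> t\<close>
    by (simp add: c0_semigroup_zero_time[OF cS] c0_semigroup_zero_time[OF cP])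
qed

lemma c0_semigroup_integral_quotient_tendsto:
  fixes S :: "real \<Rightarrow> 'a::banach \<Rightarrow> 'a"
  assumes c0: "c0_semigroup S" and "0 \<le> a"
  shows "((\<lambda>h. (1 / h) *\<^sub>R (integral {0..a + h} (\<lambda>r. S r x) - integral {0..a} (\<lambda>r. S r x)))
    \<longlongrightarrow> S a x) (at_right 0)"
proof (rule has_vector_derivative_tendsto_at_right)
  have "continuous_on {0..a + 1} (\<lambda>r. S r x)"
    by (rule continuous_on_subset[OF c0_semigroup_continuous_on_orbit[OF c0]]) auto
  then have "((\<lambda>b. integral {0..b} (\<lambda>r. S r x)) has_vector_derivative S a x) (at a within {0..a + 1})"
    by (rule integral_has_vector_derivative) (use \<open>0 \<le> a\<close> in simp)
  then show "((\<lambda>b. integral {0..b} (\<lambda>r. S r x)) has_vector_derivative S a x) (at a within {a..a + 1})"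
    by (rule has_vector_derivative_within_subset) (use \<open>0 \<le> a\<close> in auto)
qed simp

lemma c0_semigroup_integral_shift:
  fixes S :: "real \<Rightarrow> 'a::banach \<Rightarrow> 'a"
  assumes c0: "c0_semigroup S" and "0 \<le> h" "0 \<le> k"
  shows "S k (integral {0..h} (\<lambda>r. S r x)) = integral {0..h + k} (\<lambda>r. S r x) - integral {0..k} (\<lambda>r. S r x)"
proof -
  have int: "(\<lambda>r. S r x) integrable_on {a..b}" if "0 \<le> a" for a b
    by (rule integrable_continuous_interval continuous_on_subset[OF c0_semigroup_continuous_on_orbit[OF c0]])+
      (use that in auto)
  have "S k (integral {0..h} (\<lambda>r. S r x)) = integral {0..h} (S k \<circ> (\<lambda>r. S r x))"
    by (rule integral_linear[symmetric, OF int c0_semigroup_bounded_linear[OF c0 \<open>0 \<le> k\<close>]]) simp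
  also have "\<dots> = integral {0..h} ((\<lambda>r. S r x) \<circ> (+) k)"
  proof (rule integral_cong)
    fix r
    assume "r \<in> {0..h}"
    then show "(S k \<circ> (\<lambda>r. S r x)) r = ((\<lambda>r. S r x) \<circ> (+) k) r"
      using c0_semigroup_add_time[OF c0 \<open>0 \<le> k\<close>, of r x] by simp
  qed
  also have "\<dots> = integral {0 + k..h + k} (\<lambda>r. S r x)"
    by (rule integral_shift_Icc_real)
  finally have "S k (integral {0..h} (\<lambda>r. S r x)) = integral {k..h + k} (\<lambda>r. S r x)"
    by simp
  moreover have "integral {0..k} (\<lambda>r. S r x) + integral {k..h + k} (\<lambda>r. S r x)
      = integral {0..h + k} (\<lambda>r. S r x)"
    using assms by (intro Henstock_Kurzweil_Integration.integral_combine int) auto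
  ultimately show ?thesis
    by (metis add_diff_cancel_left')
qed

lemma c0_semigroup_mean_tendsto:
  fixes S :: "real \<Rightarrow> 'a::banach \<Rightarrow> 'a"
  assumes "c0_semigroup S"
  shows "((\<lambda>h. (1 / h) *\<^sub>R integral {0..h} (\<lambda>r. S r x)) \<longlongrightarrow> x) (at_right 0)"
  using c0_semigroup_integral_quotient_tendsto[OF assms order.refl, of x]
  by (simp add: c0_semigroup_zero_time[OF assms])

lemma c0_semigroup_mean_in_domain:
  fixes S :: "real \<Rightarrow> 'a::banach \<Rightarrow> 'a"
  assumes c0: "c0_semigroup S" and gen: "is_generator S D G" and "0 < h"
  shows "(1 / h) *\<^sub>R integral {0..h} (\<lambda>r. S r x) \<in> D"
proof (rule is_generator_intro(1)[OF gen])
  define \<Phi> where "\<Phi> b = integral {0..b} (\<lambda>r. S r x)" for b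
  have "((\<lambda>k. (1 / h) *\<^sub>R ((1 / k) *\<^sub>R (\<Phi> (h + k) - \<Phi> h) - (1 / k) *\<^sub>R \<Phi> k))
      \<longlongrightarrow> (1 / h) *\<^sub>R (S h x - x)) (at_right 0)"
    unfolding \<Phi>_def using \<open>0 < h\<close>
    by (intro tendsto_scaleR tendsto_const tendsto_diff c0_semigroup_mean_tendsto[OF c0]
        c0_semigroup_integral_quotient_tendsto[OF c0]) simp
  moreover have "\<forall>\<^sub>F k in at_right 0.
      (1 / h) *\<^sub>R ((1 / k) *\<^sub>R (\<Phi> (h + k) - \<Phi> h) - (1 / k) *\<^sub>R \<Phi> k)
      = (1 / k) *\<^sub>R (S k ((1 / h) *\<^sub>R \<Phi> h) - (1 / h) *\<^sub>R \<Phi> h)"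
    using eventually_at_right_less
  proof eventually_elim
    case (elim k)
    have "S k ((1 / h) *\<^sub>R \<Phi> h) = (1 / h) *\<^sub>R (\<Phi> (h + k) - \<Phi> k)"
      using c0_semigroup_integral_shift[OF c0, of h k x] elim \<open>0 < h\<close>
      by (simp add: \<Phi>_def c0_semigroup_scaleR[OF c0])
    then show ?case
      by (simp add: scaleR_diff_right mult.commute)
  qed
  ultimately show "((\<lambda>k. (1 / k) *\<^sub>R (S k ((1 / h) *\<^sub>R \<Phi> h) - (1 / h) *\<^sub>R \<Phi> h))
      \<longlongrightarrow> (1 / h) *\<^sub>R (S h x - x)) (at_right 0)"
    by (rule Lim_transform_eventually)
qed

lemma c0_semigroup_unique:
  fixes S P :: "real \<Rightarrow> 'a::banach \<Rightarrow> 'a"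
  assumes cS: "c0_semigroup S" and cP: "c0_semigroup P"
    and gS: "is_generator S D G" and gP: "is_generator P D G" and "0 \<le> t"
  shows "S t x = P t x"
proof -
  define m where "m h = (1 / h) *\<^sub>R integral {0..h} (\<lambda>r. S r x)" for h
  have "P t (m h) = S t (m h)" if "0 < h" for h
    unfolding m_def
    by (rule c0_semigroup_eq_on_domain[OF cS cP gS gP c0_semigroup_mean_in_domain[OF cS gS that]
          \<open>0 \<le> t\<close>, symmetric])
  then have "\<forall>\<^sub>F h in at_right 0. P t (m h) = S t (m h)"
    using eventually_at_right_less by (rule eventually_mono[rotated])
  moreover have "(m \<longlongrightarrow> x) (at_right 0)"
    unfolding m_def by (rule c0_semigroup_mean_tendsto[OF cS])
  then have "((\<lambda>h. P t (m h)) \<longlongrightarrow> P t x) (at_right 0)"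
    by (rule bounded_linear.tendsto[OF c0_semigroup_bounded_linear[OF cP \<open>0 \<le> t\<close>]])
  ultimately have "((\<lambda>h. S t (m h)) \<longlongrightarrow> P t x) (at_right 0)"
    by (rule Lim_transform_eventually[rotated])
  moreover have "((\<lambda>h. S t (m h)) \<longlongrightarrow> S t x) (at_right 0)"
    using \<open>(m \<longlongrightarrow> x) (at_right 0)\<close>
    by (rule bounded_linear.tendsto[OF c0_semigroup_bounded_linear[OF cS \<open>0 \<le> t\<close>]])
  ultimately show ?thesis
    using tendsto_unique[OF trivial_limit_at_right_real] by blast
qed

lemma positive_semigroup_if_same_generator:
  assumes "generates_c0 D G S" "generates_c0 D G P" "positive_semigroup (P :: real \<Rightarrow> 'a::{banach, order} \<Rightarrow> 'a)"
  shows "positive_semigroup S"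
  using assms c0_semigroup_unique[of S P D G]
  unfolding generates_c0_def positive_semigroup_def by simp

text \<open>The semigroup generated by G - \<gamma>, if S is generated by G.\<close>

definition rescaled_semigroup :: "(real \<Rightarrow> 'a \<Rightarrow> 'a::real_vector) \<Rightarrow> real \<Rightarrow> real \<Rightarrow> 'a \<Rightarrow> 'a" where
  "rescaled_semigroup S \<gamma> t x = exp (- \<gamma> * t) *\<^sub>R S t x"

lemma c0_semigroup_rescaled:
  assumes c0: "c0_semigroup S"
  shows "c0_semigroup (rescaled_semigroup S \<gamma>)"
  unfolding c0_semigroup_def rescaled_semigroup_def
proof (intro conjI allI impI ext)
  show "bounded_linear (\<lambda>x. exp (- \<gamma> * t) *\<^sub>R S t x)" if "0 \<le> t" for t
    using bounded_linear_compose[OF bounded_linear_scaleR_right c0_semigroup_bounded_linear[OF c0 that]] .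
  show "exp (- \<gamma> * 0) *\<^sub>R S 0 x = id x" for x
    by (simp add: c0_semigroup_zero_time[OF c0])
  show "exp (- \<gamma> * (t + s)) *\<^sub>R S (t + s) x
      = ((\<lambda>x. exp (- \<gamma> * t) *\<^sub>R S t x) \<circ> (\<lambda>x. exp (- \<gamma> * s) *\<^sub>R S s x)) x"
    if "0 \<le> t" "0 \<le> s" for t s x
    using that
    by (simp add: c0_semigroup_add_time[OF c0] c0_semigroup_scaleR[OF c0] distrib_left mult_exp_exp)
  show "continuous_on {0..} (\<lambda>t. exp (- \<gamma> * t) *\<^sub>R S t x)" for x
    by (intro continuous_intros c0_semigroup_continuous_on_orbit[OF c0])
qed

lemma positive_semigroup_rescaled:
  fixes S :: "real \<Rightarrow> 'a::{real_normed_vector, ordered_real_vector} \<Rightarrow> 'a"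
  shows "positive_semigroup S \<Longrightarrow> positive_semigroup (rescaled_semigroup S \<gamma>)"
  unfolding positive_semigroup_def rescaled_semigroup_def by (auto intro!: scaleR_nonneg_nonneg)

lemma norm_rescaled_semigroup_le:
  assumes "0 \<le> \<gamma>" "0 \<le> t" "norm (S t x) \<le> M * norm x"
  shows "norm (rescaled_semigroup S \<gamma> t x) \<le> M * norm x"
proof -
  have "exp (- \<gamma> * t) * norm (S t x) \<le> 1 * norm (S t x)"
    using assms(1,2) by (intro mult_right_mono) auto
  then show ?thesis
    using assms(3) by (simp add: rescaled_semigroup_def)
qed

section \<open>Mild solutions\<close>

definition duhamel :: "(real \<Rightarrow> 'a \<Rightarrow> 'a) \<Rightarrow> (real \<Rightarrow> 'a::real_normed_vector) \<Rightarrow> real \<Rightarrow> 'a" where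
  "duhamel S f t = integral {0..t} (\<lambda>s. S (t - s) (f s))"

lemma continuous_on_duhamel_integrand:
  fixes S :: "real \<Rightarrow> 'a::banach \<Rightarrow> 'a"
  assumes "c0_semigroup S" "continuous_on {a..t} f"
  shows "continuous_on {a..t} (\<lambda>s. S (t - s) (f s))"
  by (rule continuous_on_c0_semigroup_compose[OF assms(1) _ assms(2)]) (auto intro!: continuous_intros)

lemma integrable_duhamel_integrand:
  fixes S :: "real \<Rightarrow> 'a::banach \<Rightarrow> 'a"
  assumes "c0_semigroup S" "continuous_on {a..t} f"
  shows "(\<lambda>s. S (t - s) (f s)) integrable_on {a..t}"
  by (rule integrable_continuous_interval continuous_on_duhamel_integrand assms)+

lemma duhamel_nonneg:
  fixes S :: "real \<Rightarrow> 'a::banach_lattice \<Rightarrow> 'a"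
  assumes "positive_semigroup S" "\<And>s. s \<in> {0..t} \<Longrightarrow> 0 \<le> f s"
  shows "0 \<le> duhamel S f t"
  using assms unfolding duhamel_def positive_semigroup_def
  by (intro integral_nonneg_banach_lattice) auto

lemma norm_duhamel_diff_le:
  fixes S :: "real \<Rightarrow> 'a::banach \<Rightarrow> 'a"
  assumes c0: "c0_semigroup S" and M: "\<And>r x. r \<in> {0..t} \<Longrightarrow> norm (S r x) \<le> M * norm x"
    and f: "continuous_on {0..t} f" and g: "continuous_on {0..t} g"
  shows "norm (duhamel S f t - duhamel S g t) \<le> M * integral {0..t} (\<lambda>s. norm (f s - g s))"
proof -
  have fg: "continuous_on {0..t} (\<lambda>s. f s - g s)"
    by (intro continuous_on_diff f g)
  have "duhamel S f t - duhamel S g t = integral {0..t} (\<lambda>s. S (t - s) (f s) - S (t - s) (g s))"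
    unfolding duhamel_def
    by (rule integral_diff[symmetric]) (rule integrable_duhamel_integrand[OF c0]; fact)+
  also have "\<dots> = integral {0..t} (\<lambda>s. S (t - s) (f s - g s))"
    by (rule integral_cong) (simp add: c0_semigroup_diff[OF c0])
  also have "norm \<dots> \<le> integral {0..t} (\<lambda>s. M * norm (f s - g s))"
  proof (rule integral_norm_bound_integral)
    show "(\<lambda>s. S (t - s) (f s - g s)) integrable_on {0..t}"
      by (rule integrable_duhamel_integrand[OF c0 fg])
    show "(\<lambda>s. M * norm (f s - g s)) integrable_on {0..t}"
      by (intro integrable_continuous_interval continuous_on_mult continuous_on_const
          continuous_on_norm fg)
    show "norm (S (t - s) (f s - g s)) \<le> M * norm (f s - g s)" if "s \<in> {0..t}" for s
      using that by (intro M) auto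
  qed
  also have "\<dots> = M * integral {0..t} (\<lambda>s. norm (f s - g s))"
    by simp
  finally show ?thesis .
qed

lemma norm_diff_sup_zero_duhamel_le:
  fixes P :: "real \<Rightarrow> 'a::banach_lattice \<Rightarrow> 'a"
  assumes c0: "c0_semigroup P" and pos: "positive_semigroup P"
    and M: "\<And>r x. r \<in> {0..t} \<Longrightarrow> norm (P r x) \<le> M * norm x"
    and y: "y = P t x + duhamel P f t"
    and f: "continuous_on {0..t} f" and g: "continuous_on {0..t} g" "\<And>s. s \<in> {0..t} \<Longrightarrow> 0 \<le> g s"
    and "0 \<le> x" and "0 \<le> t"
  shows "norm (y - sup y 0) \<le> M * integral {0..t} (\<lambda>s. norm (f s - g s))"
proof -
  have "0 \<le> P t x"
    using pos \<open>0 \<le> x\<close> \<open>0 \<le> t\<close> by (simp add: positive_semigroup_def)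
  moreover have "0 \<le> duhamel P g t"
    using pos g(2) by (rule duhamel_nonneg)
  ultimately have "norm (y - sup y 0) \<le> norm (y - (P t x + duhamel P g t))"
    by (intro norm_diff_sup_zero_le add_nonneg_nonneg)
  also have "\<dots> = norm (duhamel P f t - duhamel P g t)"
    using y by simp
  also have "\<dots> \<le> M * integral {0..t} (\<lambda>s. norm (f s - g s))"
    by (rule norm_duhamel_diff_le[OF c0 M f g(1)])
  finally show ?thesis .
qed

lemma c0_semigroup_apply_mild:
  fixes S :: "real \<Rightarrow> 'a::banach \<Rightarrow> 'a"
  assumes c0: "c0_semigroup S" and f: "continuous_on {0..s} f" and "0 \<le> s" "s \<le> t"
  shows "S (t - s) (S s u0 + duhamel S f s) = S t u0 + integral {0..s} (\<lambda>r. S (t - r) (f r))"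
proof -
  have "S (t - s) (duhamel S f s) = integral {0..s} (S (t - s) \<circ> (\<lambda>r. S (s - r) (f r)))"
    unfolding duhamel_def
    by (rule integral_linear[symmetric, OF integrable_duhamel_integrand[OF c0 f]
          c0_semigroup_bounded_linear[OF c0]]) (use assms in simp)
  also have "\<dots> = integral {0..s} (\<lambda>r. S (t - r) (f r))"
  proof (rule integral_cong)
    fix r
    assume "r \<in> {0..s}"
    then show "(S (t - s) \<circ> (\<lambda>r. S (s - r) (f r))) r = S (t - r) (f r)"
      using assms c0_semigroup_add_time[OF c0, of "t - s" "s - r" "f r"] by simp
  qed
  finally show ?thesis
    using assms c0_semigroup_add_time[OF c0, of "t - s" s u0] by (simp add: c0_semigroup_add[OF c0])
qed

lemma mild_formula_rescaled:
  fixes S :: "real \<Rightarrow> 'a::banach \<Rightarrow> 'a"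
  assumes c0: "c0_semigroup S" and f: "continuous_on {0..\<tau>} f"
    and mild: "\<And>t. t \<in> {0..\<tau>} \<Longrightarrow> v t = S t u0 + duhamel S f t"
    and t: "t \<in> {0..\<tau>}"
  shows "v t = rescaled_semigroup S \<gamma> t u0 + duhamel (rescaled_semigroup S \<gamma>) (\<lambda>s. f s + \<gamma> *\<^sub>R v s) t"
proof -
  define I where "I s = integral {0..s} (\<lambda>r. S (t - r) (f r))" for s
  \<comment> \<open>H s equals exp (- \<gamma> (t - s)) S (t - s) (v s), but can be differentiated without differentiating v.\<close>
  define H where "H s = exp (- \<gamma> * (t - s)) *\<^sub>R (S t u0 + I s)" for s
  have cont: "continuous_on {0..t} (\<lambda>r. S (t - r) (f r))"
    using t by (intro continuous_on_duhamel_integrand[OF c0] continuous_on_subset[OF f]) auto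
  have Sv: "S (t - s) (v s) = S t u0 + I s" if "s \<in> {0..t}" for s
    using that t c0_semigroup_apply_mild[OF c0 continuous_on_subset[OF f], of s t u0] mild[of s]
    by (simp add: I_def)
  have "(H has_vector_derivative rescaled_semigroup S \<gamma> (t - s) (f s + \<gamma> *\<^sub>R v s)) (at s within {0..t})"
    if s: "s \<in> {0..t}" for s
    unfolding H_def
    using has_vector_derivative_exp_scaleR_integral[OF cont s, of \<gamma> "S t u0"] Sv[OF s] s
    by (simp add: I_def rescaled_semigroup_def c0_semigroup_add[OF c0] c0_semigroup_scaleR[OF c0])
  then have "((\<lambda>s. rescaled_semigroup S \<gamma> (t - s) (f s + \<gamma> *\<^sub>R v s)) has_integral H t - H 0) {0..t}"
    using t by (intro fundamental_theorem_of_calculus) auto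
  moreover have "H t = v t" "H 0 = rescaled_semigroup S \<gamma> t u0"
    using Sv[of t] t by (simp_all add: H_def I_def rescaled_semigroup_def c0_semigroup_zero_time[OF c0])
  ultimately show ?thesis
    unfolding duhamel_def by (simp add: integral_unique)
qed

lemma mild_solution_nonneg:
  fixes S :: "real \<Rightarrow> 'a::banach_lattice \<Rightarrow> 'a" and F :: "real \<Rightarrow> 'a \<Rightarrow> 'a"
  assumes c0: "c0_semigroup S" and pos: "positive_semigroup S"
    and F: "continuous_on ({0..\<tau>} \<times> UNIV) (\<lambda>(t, x). F t x)"
    and lip: "\<And>t f g. t \<in> {0..\<tau>} \<Longrightarrow> norm f \<le> r \<Longrightarrow> norm g \<le> r \<Longrightarrow>
      norm (F t f - F t g) \<le> L * norm (f - g)"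
    and "0 \<le> \<gamma>" and quasipos: "\<And>v t. 0 \<le> v \<Longrightarrow> norm v \<le> r \<Longrightarrow> t \<in> {0..\<tau>} \<Longrightarrow> 0 \<le> F t v + \<gamma> *\<^sub>R v"
    and u: "continuous_on {0..\<tau>} u" and u_bound: "\<And>t. t \<in> {0..\<tau>} \<Longrightarrow> norm (u t) \<le> r"
    and mild: "\<And>t. t \<in> {0..\<tau>} \<Longrightarrow> u t = S t u0 + duhamel S (\<lambda>s. F s (u s)) t"
    and "0 \<le> u0" and "t \<in> {0..\<tau>}"
  shows "0 \<le> u t"
proof -
  define p where "p s = sup (u s) 0" for s
  define a where "a s = norm (u s - p s)" for s
  obtain M where "0 \<le> M" and M: "\<And>r x. r \<in> {0..\<tau>} \<Longrightarrow> norm (S r x) \<le> M * norm x"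
    by (rule c0_semigroup_bounded_on_interval[OF c0]) (rule that)
  have p: "continuous_on {0..\<tau>} p"
    unfolding p_def by (rule continuous_on_compose2[OF continuous_on_sup_zero u]) auto
  have a: "continuous_on {0..\<tau>} a"
    unfolding a_def by (intro continuous_on_norm continuous_on_diff u p)
  have p_bound: "norm (p s) \<le> r" if "s \<in> {0..\<tau>}" for s
    using norm_sup_zero_le[of "u s"] u_bound[OF that] unfolding p_def by linarith
  have Fu: "continuous_on {0..\<tau>} (\<lambda>s. F s (u s) + \<gamma> *\<^sub>R u s)"
    by (intro continuous_intros continuous_on_uncurry_compose[OF F] u)
  have Fp: "continuous_on {0..\<tau>} (\<lambda>s. F s (p s) + \<gamma> *\<^sub>R p s)"
    by (intro continuous_intros continuous_on_uncurry_compose[OF F] p)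
  have "a t \<le> 0 + M * (\<bar>L\<bar> + \<gamma>) * integral {0..t} a" if t: "t \<in> {0..\<tau>}" for t
  proof -
    have sub: "{0..t} \<subseteq> {0..\<tau>}"
      using t by auto
    have "a t \<le> M * integral {0..t} (\<lambda>s. norm ((F s (u s) + \<gamma> *\<^sub>R u s) - (F s (p s) + \<gamma> *\<^sub>R p s)))"
      unfolding a_def p_def
    proof (rule norm_diff_sup_zero_duhamel_le[where P = "rescaled_semigroup S \<gamma>" and x = u0])
      show "norm (rescaled_semigroup S \<gamma> r x) \<le> M * norm x" if "r \<in> {0..t}" for r x
        using that sub \<open>0 \<le> \<gamma>\<close> by (intro norm_rescaled_semigroup_le M) auto
      show "u t = rescaled_semigroup S \<gamma> t u0
          + duhamel (rescaled_semigroup S \<gamma>) (\<lambda>s. F s (u s) + \<gamma> *\<^sub>R u s) t"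
        by (rule mild_formula_rescaled[OF c0 continuous_on_uncurry_compose[OF F u] mild t])
      show "0 \<le> F s (sup (u s) 0) + \<gamma> *\<^sub>R sup (u s) 0" if "s \<in> {0..t}" for s
        using quasipos[OF _ p_bound] that sub by (simp add: p_def subset_iff)
    qed (use c0_semigroup_rescaled[OF c0] positive_semigroup_rescaled[OF pos] Fu Fp sub t \<open>0 \<le> u0\<close>
        in \<open>auto simp: p_def intro: continuous_on_subset\<close>)
    also have "\<dots> \<le> M * integral {0..t} (\<lambda>s. (\<bar>L\<bar> + \<gamma>) * a s)"
      using sub norm_shifted_diff_le[OF lip \<open>0 \<le> \<gamma>\<close>] u_bound p_bound \<open>0 \<le> M\<close>
      by (intro mult_left_mono integral_le integrable_continuous_interval continuous_intros
          continuous_on_subset[OF Fu sub] continuous_on_subset[OF Fp sub] continuous_on_subset[OF a sub])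
        (auto simp: a_def)
    also have "\<dots> = 0 + M * (\<bar>L\<bar> + \<gamma>) * integral {0..t} a"
      by simp
    finally show ?thesis .
  qed
  then have "a t \<le> 0 * exp (M * (\<bar>L\<bar> + \<gamma>) * t)"
    using \<open>0 \<le> M\<close> \<open>0 \<le> \<gamma>\<close> \<open>t \<in> {0..\<tau>}\<close> by (intro gronwall_integral[OF _ a]) auto
  then have "u t = sup (u t) 0"
    by (simp add: a_def p_def)
  then show ?thesis
    by (metis sup_ge2)
qed

lemma functional_rescaled_mild_le:
  fixes S :: "real \<Rightarrow> 'a::banach_lattice \<Rightarrow> 'a" and \<phi> :: "'a \<Rightarrow> real"
  assumes c0: "c0_semigroup S" and \<phi>: "bounded_linear \<phi>"
    and \<phi>_S: "\<And>t x. 0 \<le> t \<Longrightarrow> 0 \<le> x \<Longrightarrow> \<phi> (S t x) \<le> \<phi> x"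
    and w: "continuous_on {0..t} w" "\<And>s. s \<in> {0..t} \<Longrightarrow> 0 \<le> w s"
    and g: "continuous_on {0..t} g" "\<And>s. s \<in> {0..t} \<Longrightarrow> \<phi> (w s) \<le> g s"
    and "0 \<le> x0" and "0 \<le> t"
  shows "\<phi> (rescaled_semigroup S \<delta> t x0 + duhamel (rescaled_semigroup S \<delta>) w t)
    \<le> exp (- \<delta> * t) * \<phi> x0 + integral {0..t} (\<lambda>s. exp (- \<delta> * (t - s)) * g s)"
proof -
  interpret \<phi>: bounded_linear \<phi>
    by (rule \<phi>)
  have int: "(\<lambda>s. rescaled_semigroup S \<delta> (t - s) (w s)) integrable_on {0..t}"
    by (rule integrable_duhamel_integrand[OF c0_semigroup_rescaled[OF c0] w(1)])
  have "\<phi> (rescaled_semigroup S \<delta> t x0 + duhamel (rescaled_semigroup S \<delta>) w t)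
      = \<phi> (rescaled_semigroup S \<delta> t x0) + integral {0..t} (\<lambda>s. \<phi> (rescaled_semigroup S \<delta> (t - s) (w s)))"
    using integral_linear[OF int \<phi>] by (simp add: duhamel_def \<phi>.add o_def)
  also have "\<dots> \<le> exp (- \<delta> * t) * \<phi> x0 + integral {0..t} (\<lambda>s. exp (- \<delta> * (t - s)) * g s)"
  proof (rule add_mono)
    show "\<phi> (rescaled_semigroup S \<delta> t x0) \<le> exp (- \<delta> * t) * \<phi> x0"
      using \<phi>_S \<open>0 \<le> t\<close> \<open>0 \<le> x0\<close> by (simp add: rescaled_semigroup_def \<phi>.scaleR)
    show "integral {0..t} (\<lambda>s. \<phi> (rescaled_semigroup S \<delta> (t - s) (w s)))
        \<le> integral {0..t} (\<lambda>s. exp (- \<delta> * (t - s)) * g s)"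
    proof (rule integral_le)
      show "(\<lambda>s. \<phi> (rescaled_semigroup S \<delta> (t - s) (w s))) integrable_on {0..t}"
        using integrable_linear[OF int \<phi>] by (simp add: o_def)
      show "(\<lambda>s. exp (- \<delta> * (t - s)) * g s) integrable_on {0..t}"
        by (intro integrable_continuous_interval continuous_intros g(1))
      show "\<phi> (rescaled_semigroup S \<delta> (t - s) (w s)) \<le> exp (- \<delta> * (t - s)) * g s"
        if "s \<in> {0..t}" for s
        using \<phi>_S[of "t - s" "w s"] w(2)[OF that] g(2)[OF that] that
        by (simp add: rescaled_semigroup_def \<phi>.scaleR)
    qed
  qed
  finally show ?thesis .
qed

lemma mild_solution_functional_le:
  fixes S :: "real \<Rightarrow> 'a::banach_lattice \<Rightarrow> 'a" and \<phi> :: "'a \<Rightarrow> real"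
  assumes c0: "c0_semigroup S" and \<phi>: "bounded_linear \<phi>"
    and \<phi>_S: "\<And>t x. 0 \<le> t \<Longrightarrow> 0 \<le> x \<Longrightarrow> \<phi> (S t x) \<le> \<phi> x"
    and f: "continuous_on {0..\<tau>} f" and u: "continuous_on {0..\<tau>} u"
    and "0 \<le> \<gamma>" and shifted_nonneg: "\<And>s. s \<in> {0..\<tau>} \<Longrightarrow> 0 \<le> f s + \<gamma> *\<^sub>R u s"
    and u_nonneg: "\<And>s. s \<in> {0..\<tau>} \<Longrightarrow> 0 \<le> u s"
    and mild: "\<And>t. t \<in> {0..\<tau>} \<Longrightarrow> u t = S t u0 + duhamel S f t"
    and "0 \<le> u0"
    and \<nu>: "\<And>s. s \<in> {0..\<tau>} \<Longrightarrow> \<phi> (f s) \<le> \<nu> * \<phi> (u s)"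
    and "t \<in> {0..\<tau>}"
  shows "\<phi> (u t) \<le> \<phi> u0 * exp (\<nu> * t)"
proof -
  interpret \<phi>: bounded_linear \<phi>
    by (rule \<phi>)
  \<comment> \<open>Enlarging \<gamma> by |\<nu>| makes the Gronwall constant \<nu> + \<delta> nonnegative.\<close>
  define \<delta> where "\<delta> = \<gamma> + \<bar>\<nu>\<bar>"
  define w where "w s = f s + \<delta> *\<^sub>R u s" for s
  have w: "continuous_on {0..\<tau>} w"
    unfolding w_def by (intro continuous_intros f u)
  have w_nonneg: "0 \<le> w s" if "s \<in> {0..\<tau>}" for s
  proof -
    have "w s = (f s + \<gamma> *\<^sub>R u s) + \<bar>\<nu>\<bar> *\<^sub>R u s"
      by (simp add: w_def \<delta>_def algebra_simps)
    then show ?thesis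
      using shifted_nonneg[OF that] u_nonneg[OF that] by (simp add: scaleR_nonneg_nonneg)
  qed
  have \<phi>_u: "continuous_on {0..\<tau>} (\<lambda>s. \<phi> (u s))"
    by (rule continuous_on_compose2[OF linear_continuous_on[OF \<phi>] u]) auto
  have "\<phi> (u t) \<le> exp (- \<delta> * t) * \<phi> u0 + integral {0..t} (\<lambda>s. exp (- \<delta> * (t - s)) * ((\<nu> + \<delta>) * \<phi> (u s)))"
    if t: "t \<in> {0..\<tau>}" for t
  proof -
    have sub: "{0..t} \<subseteq> {0..\<tau>}"
      using t by auto
    have w_t: "continuous_on {0..t} w"
      using w sub by (rule continuous_on_subset)
    have w_t_nonneg: "0 \<le> w s" if "s \<in> {0..t}" for s
      using w_nonneg that sub by blast
    have bound_t: "continuous_on {0..t} (\<lambda>s. (\<nu> + \<delta>) * \<phi> (u s))"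
      by (intro continuous_on_mult continuous_on_const continuous_on_subset[OF \<phi>_u sub])
    have \<phi>_w: "\<phi> (w s) \<le> (\<nu> + \<delta>) * \<phi> (u s)" if "s \<in> {0..t}" for s
    proof -
      have "s \<in> {0..\<tau>}"
        using that sub by blast
      then show ?thesis
        using \<nu> by (simp add: w_def \<phi>.add \<phi>.scaleR algebra_simps)
    qed
    have "u t = rescaled_semigroup S \<delta> t u0 + duhamel (rescaled_semigroup S \<delta>) w t"
      unfolding w_def by (rule mild_formula_rescaled[OF c0 f mild t])
    also have "\<phi> \<dots> \<le> exp (- \<delta> * t) * \<phi> u0
        + integral {0..t} (\<lambda>s. exp (- \<delta> * (t - s)) * ((\<nu> + \<delta>) * \<phi> (u s)))"
      using t by (intro functional_rescaled_mild_le[OF c0 \<phi> \<phi>_S w_t w_t_nonneg bound_t \<phi>_w \<open>0 \<le> u0\<close>]) auto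
    finally show ?thesis .
  qed
  moreover have "0 \<le> \<nu> + \<delta>"
    using \<open>0 \<le> \<gamma>\<close> by (simp add: \<delta>_def)
  ultimately have "\<phi> (u t) \<le> \<phi> u0 * exp ((\<nu> + \<delta> - \<delta>) * t)"
    by (intro gronwall_integral_exp_weighted[OF _ \<phi>_u _ \<open>t \<in> {0..\<tau>}\<close>]) (auto simp: mult.commute)
  then show ?thesis
    by simp
qed

lemma Icc_subset_Ico0:
  assumes "ereal \<tau> < T"
  shows "{0..\<tau>} \<subseteq> Ico0 T"
proof
  fix t
  assume "t \<in> {0..\<tau>}"
  then have "ereal t \<le> ereal \<tau>" "0 \<le> t"
    by auto
  moreover have "ereal t < T"
    using \<open>ereal t \<le> ereal \<tau>\<close> assms by (rule order.strict_trans1)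
  ultimately show "t \<in> Ico0 T"
    by (simp add: Ico0_def)
qed

lemma mild_solution_on_Icc:
  assumes "mild_solution T S F u0 t1 u" and "ereal \<tau> < t1"
  shows "{0..\<tau>} \<subseteq> Ico0 T" and "continuous_on {0..\<tau>} u"
    and "\<And>t. t \<in> {0..\<tau>} \<Longrightarrow> u t = S t u0 + duhamel S (\<lambda>s. F s (u s)) t"
proof -
  have sub: "{0..\<tau>} \<subseteq> Ico0 t1"
    by (rule Icc_subset_Ico0[OF assms(2)])
  have "t1 \<le> T"
    using assms(1) by (simp add: mild_solution_def)
  then show "{0..\<tau>} \<subseteq> Ico0 T"
    using assms(2) by (intro Icc_subset_Ico0) (rule order.strict_trans2)
  show "continuous_on {0..\<tau>} u"
    using assms(1) sub unfolding mild_solution_def by (auto intro: continuous_on_subset)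
  show "u t = S t u0 + duhamel S (\<lambda>s. F s (u s)) t" if "t \<in> {0..\<tau>}" for t
    using assms(1) sub that unfolding mild_solution_def duhamel_def by auto
qed

theorem proposition3p14:
  fixes T :: ereal
    and D :: "'a::banach_lattice set"
    and G :: "'a \<Rightarrow> 'a"
    and S :: "real \<Rightarrow> 'a \<Rightarrow> 'a"
    and \<eta> :: "real \<Rightarrow> real"
    and F :: "real \<Rightarrow> 'a \<Rightarrow> 'a"
    and \<phi> :: "'a \<Rightarrow> real"
    and u0 :: 'a
    and u :: "real \<Rightarrow> 'a"
    and tmax :: ereal
    and \<tau> :: real
    and \<nu> :: real
  assumes T_pos: "0 < T"
    and gen: "generates_c0 D G S"
    and eta_pos: "\<forall>\<delta>>0. \<eta> \<delta> > 0"
    and eta_lim: "(\<eta> \<longlongrightarrow> 0) (at_right 0)"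
    and eta_bound: "\<forall>s0 s1 \<psi>. 0 \<le> s0 \<longrightarrow> s0 < s1 \<longrightarrow> continuous_on {s0..s1} \<psi> \<longrightarrow>
        norm (integral {s0..s1} (\<lambda>s. S (s1 - s) (\<psi> s)))
          \<le> \<eta> (s1 - s0) * (SUP s\<in>{s0..s1}. norm (\<psi> s))"
    and F_cont: "continuous_on (Ico0 T \<times> UNIV) (\<lambda>(t, x). F t x)"
    and F_lip: "lipschitz_bounded_uniform T F"
    and shifted_pos: "\<forall>\<gamma>\<ge>0. \<exists>P. generates_c0 D (\<lambda>x. G x - \<gamma> *\<^sub>R x) P \<and> positive_semigroup P"
    and F_quasipos: "\<forall>\<tau>'\<in>Ico0 T. \<forall>r>0. \<exists>\<gamma>\<ge>0. \<forall>v t. 0 \<le> v \<longrightarrow> norm v \<le> r \<longrightarrow> t \<in> {0..\<tau>'} \<longrightarrow>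
        0 \<le> F t v + \<gamma> *\<^sub>R v"
    and phi_lin: "bounded_linear \<phi>"
    and phi_pos: "\<forall>f. 0 \<le> f \<longrightarrow> 0 \<le> \<phi> f"
    and phi_S: "\<forall>f t. 0 \<le> f \<longrightarrow> 0 \<le> t \<longrightarrow> \<phi> (S t f) \<le> \<phi> f"
    and u0_pos: "0 \<le> u0"
    and u_max: "maximal_mild_solution T S F u0 tmax u"
    and tau: "0 < \<tau>" "ereal \<tau> < tmax"
    and nu: "\<forall>t\<in>{0..\<tau>}. \<phi> (F t (u t)) \<le> \<nu> * \<phi> (u t)"
  shows "\<forall>t\<in>{0..\<tau>}. \<phi> (u t) \<le> \<phi> u0 * exp (\<nu> * t)"
proof -
  have c0: "c0_semigroup S"
    using gen by (simp add: generates_c0_def)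
  obtain P where "generates_c0 D G P" "positive_semigroup P"
    using shifted_pos[rule_format, of 0] by auto
  with gen have S_pos: "positive_semigroup S"
    by (rule positive_semigroup_if_same_generator)
  note u = mild_solution_on_Icc[OF u_max[unfolded maximal_mild_solution_def, THEN conjunct1] tau(2)]
  then have "\<tau> \<in> Ico0 T"
    using tau(1) by auto
  obtain r where "0 < r" and u_bound: "\<And>t. t \<in> {0..\<tau>} \<Longrightarrow> norm (u t) \<le> r"
    using compact_imp_bounded[OF compact_continuous_image[OF u(2) compact_Icc]] by (auto simp: bounded_pos)
  obtain \<gamma> where "0 \<le> \<gamma>"
    and \<gamma>: "\<And>v t. 0 \<le> v \<Longrightarrow> norm v \<le> r \<Longrightarrow> t \<in> {0..\<tau>} \<Longrightarrow> 0 \<le> F t v + \<gamma> *\<^sub>R v"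
    using F_quasipos \<open>\<tau> \<in> Ico0 T\<close> \<open>0 < r\<close> by blast
  obtain L where L: "\<And>t f g. t \<in> {0..\<tau>} \<Longrightarrow> norm f \<le> r \<Longrightarrow> norm g \<le> r \<Longrightarrow>
      norm (F t f - F t g) \<le> L * norm (f - g)"
    using F_lip \<open>\<tau> \<in> Ico0 T\<close> \<open>0 < r\<close> unfolding lipschitz_bounded_uniform_def by blast
  have F: "continuous_on ({0..\<tau>} \<times> UNIV) (\<lambda>(t, x). F t x)"
    using u(1) by (intro continuous_on_subset[OF F_cont]) auto
  have u_nonneg: "0 \<le> u t" if "t \<in> {0..\<tau>}" for t
    by (rule mild_solution_nonneg[OF c0 S_pos F L \<open>0 \<le> \<gamma>\<close> \<gamma> u(2) u_bound u(3) u0_pos that])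
  show ?thesis
    by (intro ballI mild_solution_functional_le[OF c0 phi_lin _ continuous_on_uncurry_compose[OF F u(2)]
          u(2) \<open>0 \<le> \<gamma>\<close> _ u_nonneg u(3) u0_pos])
      (use phi_S \<gamma> u_bound u_nonneg nu in auto)
qed

end
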